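(* Assume (A1) and (A2) below. Then for any policy $\pi$ and any $s\in\mathcal S$, the posterior variance of the value function $U_t^\pi(s)=\mathbb{V}_{p\sim\Phi_t}\big[V^{\pi,p}(s)\big]$ satisfies the uncertainty Bellman equation $$U_t^\pi(s)=\gamma^2u_t(s)+\gamma^2\sum_{a,s'}\pi(a\mid s)\,\bar p_t(s'\mid s,a)\,U_t^\pi(s'),$$ where the local uncertainty is $$u_t(s)=\mathbb{V}_{a,s'\sim\pi,\bar p_t}\big[\bar V_t^\pi(s')\big]-\mathbb{E}_{p\sim\Phi_t}\Big[\mathbb{V}_{a,s'\sim\pi,p}\big[V^{\pi,p}(s')\big]\Big].$$
   Context: Let $\mathcal S$ be a finite state space, $\mathcal A$ a finite action space, $r:\mathcal S\times\mathcal A\to\mathbb R$ a known bounded (deterministic) reward function and $\gamma\in[0,1)$ a discount factor. A transition function $p$ assigns to each $(s,a)$ a probability distribution $p(\cdot\mid s,a)$ on $\mathcal S$. A policy $\pi$ gives distributions $\pi(\cdot\mid s)$ on $\mathcal A$. For a transition function $p$, the value function is $V^{\pi,p}(s)=\mathbb E\big[\sum_{h\ge 0}\gamma^h r(s_h,a_h)\mid s_0=s\big]$ with $a_h\sim\pi(\cdot\mid s_h)$, $s_{h+1}\sim p(\cdot\mid s_h,a_h)$. The transition function $p$ is a random variable with (posterior) distribution $\Phi_t$. Define $\bar p_t(s'\mid s,a)=\mathbb E_{p\sim\Phi_t}[p(s'\mid s,a)]$ and $\bar V^\pi_t(s)=\mathbb E_{p\sim\Phi_t}[V^{\pi,p}(s)]$.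 For a transition function $q$ and a function $f$ on $\mathcal S$, $\mathbb V_{a,s'\sim\pi,q}[f(s')]$ denotes the variance of $f(s')$ when $a\sim\pi(\cdot\mid s)$ and $s'\sim q(\cdot\mid s,a)$. Assumptions: (A1) (independent transitions) $p(s'\mid x,a)$ and $p(s'\mid y,a)$ are independent random variables if $x\neq y$; (A2) (acyclic MDP) the MDP is a directed acyclic graph, i.e., states are not visited more than once in any given episode. *)

theory Defs
  imports "HOL-Probability.Probability"
begin

definition is_dist :: "('x::finite \<Rightarrow> real) \<Rightarrow> bool" where
  "is_dist w \<longleftrightarrow> (\<forall>x. 0 \<le> w x) \<and> (\<Sum>x\<in>UNIV. w x) = 1"

text \<open>occ pol p h s x = probability that s_h = x when s_0 = s, a_k ~ pol(.|s_k),
  s_{k+1} ~ p(.|s_k,a_k).\<close>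
fun occ :: "('s::finite \<Rightarrow> 'a::finite \<Rightarrow> real) \<Rightarrow> ('s \<Rightarrow> 'a \<Rightarrow> 's \<Rightarrow> real)
             \<Rightarrow> nat \<Rightarrow> 's \<Rightarrow> 's \<Rightarrow> real" where
  "occ pol p 0 s x = (if x = s then 1 else 0)"
| "occ pol p (Suc h) s x = (\<Sum>y\<in>UNIV. occ pol p h s y * (\<Sum>a\<in>UNIV. pol y a * p y a x))"

definition mdp_value :: "real \<Rightarrow> ('s::finite \<Rightarrow> 'a::finite \<Rightarrow> real) \<Rightarrow> ('s \<Rightarrow> 'a \<Rightarrow> real)
             \<Rightarrow> ('s \<Rightarrow> 'a \<Rightarrow> 's \<Rightarrow> real) \<Rightarrow> 's \<Rightarrow> real" where
  "mdp_value \<gamma> r pol p s =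
     (\<Sum>h. \<gamma> ^ h * (\<Sum>x\<in>UNIV. occ pol p h s x * (\<Sum>a\<in>UNIV. pol x a * r x a)))"

definition step_var :: "('s::finite \<Rightarrow> 'a::finite \<Rightarrow> real) \<Rightarrow> ('s \<Rightarrow> 'a \<Rightarrow> 's \<Rightarrow> real)
             \<Rightarrow> 's \<Rightarrow> ('s \<Rightarrow> real) \<Rightarrow> real" where
  "step_var pol q s f =
     (let m = (\<Sum>a\<in>UNIV. \<Sum>s'\<in>UNIV. pol s a * q s a s' * f s')
      in (\<Sum>a\<in>UNIV. \<Sum>s'\<in>UNIV. pol s a * q s a s' * (f s' - m)\<^sup>2))"

text \<open>Posterior quantities: the random transition function is P : Omega -> transitions,
  with Omega carrying the probability measure M (law of P is Phi_t).\<close>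
definition mean_trans :: "'w measure \<Rightarrow> ('w \<Rightarrow> 's \<Rightarrow> 'a \<Rightarrow> 's \<Rightarrow> real) \<Rightarrow> 's \<Rightarrow> 'a \<Rightarrow> 's \<Rightarrow> real" where
  "mean_trans M P s a s' = prob_space.expectation M (\<lambda>\<omega>. P \<omega> s a s')"

definition mean_value :: "'w measure \<Rightarrow> ('w \<Rightarrow> 's::finite \<Rightarrow> 'a::finite \<Rightarrow> 's \<Rightarrow> real)
             \<Rightarrow> real \<Rightarrow> ('s \<Rightarrow> 'a \<Rightarrow> real) \<Rightarrow> ('s \<Rightarrow> 'a \<Rightarrow> real) \<Rightarrow> 's \<Rightarrow> real" where
  "mean_value M P \<gamma> r pol s = prob_space.expectation M (\<lambda>\<omega>. mdp_value \<gamma> r pol (P \<omega>) s)"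

definition post_var :: "'w measure \<Rightarrow> ('w \<Rightarrow> 's::finite \<Rightarrow> 'a::finite \<Rightarrow> 's \<Rightarrow> real)
             \<Rightarrow> real \<Rightarrow> ('s \<Rightarrow> 'a \<Rightarrow> real) \<Rightarrow> ('s \<Rightarrow> 'a \<Rightarrow> real) \<Rightarrow> 's \<Rightarrow> real" where
  "post_var M P \<gamma> r pol s = prob_space.variance M (\<lambda>\<omega>. mdp_value \<gamma> r pol (P \<omega>) s)"

definition local_unc :: "'w measure \<Rightarrow> ('w \<Rightarrow> 's::finite \<Rightarrow> 'a::finite \<Rightarrow> 's \<Rightarrow> real)
             \<Rightarrow> real \<Rightarrow> ('s \<Rightarrow> 'a \<Rightarrow> real) \<Rightarrow> ('s \<Rightarrow> 'a \<Rightarrow> real) \<Rightarrow> 's \<Rightarrow> real" where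
  "local_unc M P \<gamma> r pol s =
     step_var pol (mean_trans M P) s (mean_value M P \<gamma> r pol)
     - prob_space.expectation M (\<lambda>\<omega>. step_var pol (P \<omega>) s (mdp_value \<gamma> r pol (P \<omega>)))"

end

theory Submission
  imports Defs
begin

(* By the Bellman equation, V_p(s) = R(s) + gamma X_p with X_p = sum_{a,s'} pi(a|s) p(s'|s,a) V_p(s'),
   so the posterior variance of V(s) is gamma^2 Var[X]. Acyclicity means V_p(s') depends only on
   the rows p(.|x,.) of states x of lower rank than s, which by (A1) are independent of the row
   p(.|s,.); an absorbing state instead has a deterministic row. Either way
   E[p(s'|s,a) g(V(s'))] = pbar(s'|s,a) E[g(V(s'))]. With g = id this gives E[X], and with
   g = square, together with the pointwise identity X_p^2 = E_{pi,p}[V_p(s')^2] - Var_{pi,p}[V_p(s')],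
   it gives E[X^2]; subtracting yields the uncertainty Bellman equation. *)

definition policy_trans :: "('s::finite \<Rightarrow> 'a::finite \<Rightarrow> real) \<Rightarrow> ('s \<Rightarrow> 'a \<Rightarrow> 's \<Rightarrow> real) \<Rightarrow> 's \<Rightarrow> 's \<Rightarrow> real"
  where "policy_trans pol p x y = (\<Sum>a\<in>UNIV. pol x a * p x a y)"

definition policy_reward :: "('s::finite \<Rightarrow> 'a::finite \<Rightarrow> real) \<Rightarrow> ('s \<Rightarrow> 'a \<Rightarrow> real) \<Rightarrow> 's \<Rightarrow> real"
  where "policy_reward pol r x = (\<Sum>a\<in>UNIV. pol x a * r x a)"

definition step_mean :: "('s::finite \<Rightarrow> 'a::finite \<Rightarrow> real) \<Rightarrow> ('s \<Rightarrow> 'a \<Rightarrow> 's \<Rightarrow> real)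
    \<Rightarrow> 's \<Rightarrow> ('s \<Rightarrow> real) \<Rightarrow> real"
  where "step_mean pol q s f = (\<Sum>a\<in>UNIV. \<Sum>s'\<in>UNIV. pol s a * q s a s' * f s')"

definition expected_reward :: "('s::finite \<Rightarrow> 'a::finite \<Rightarrow> real) \<Rightarrow> ('s \<Rightarrow> 'a \<Rightarrow> 's \<Rightarrow> real)
    \<Rightarrow> ('s \<Rightarrow> 'a \<Rightarrow> real) \<Rightarrow> nat \<Rightarrow> 's \<Rightarrow> real"
  where "expected_reward pol p r h s = (\<Sum>x\<in>UNIV. occ pol p h s x * policy_reward pol r x)"

lemma is_dist_nonneg: "is_dist w \<Longrightarrow> 0 \<le> w x"
  by (simp add: is_dist_def)

lemma is_dist_sum: "is_dist w \<Longrightarrow> (\<Sum>x\<in>UNIV. w x) = 1"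
  by (simp add: is_dist_def)

lemma is_dist_le_1:
  assumes "is_dist w"
  shows "w x \<le> 1"
proof -
  have "w x \<le> (\<Sum>y\<in>UNIV. w y)"
    using assms by (intro member_le_sum) (auto simp: is_dist_nonneg)
  then show ?thesis
    using assms by (simp add: is_dist_sum)
qed

lemma is_dist_eq_0_if_eq_1:
  assumes w: "is_dist w" and "w x = 1" "y \<noteq> x"
  shows "w y = 0"
proof -
  have "(\<Sum>z\<in>UNIV. w z) = w x + (\<Sum>z\<in>UNIV - {x}. w z)"
    by (simp add: sum.remove)
  then have "(\<Sum>z\<in>UNIV - {x}. w z) = 0"
    using assms by (simp add: is_dist_sum)
  then show ?thesis
    using w \<open>y \<noteq> x\<close> by (simp add: sum_nonneg_eq_0_iff is_dist_nonneg)
qed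

lemma step_mean_add:
  "step_mean pol q s (\<lambda>y. f y + g y) = step_mean pol q s f + step_mean pol q s g"
  by (simp add: step_mean_def distrib_left sum.distrib)

lemma step_mean_eq_policy_trans:
  "step_mean pol q s f = (\<Sum>y\<in>UNIV. policy_trans pol q s y * f y)"
  unfolding step_mean_def policy_trans_def sum_distrib_right by (rule sum.swap)

lemma step_var_eq:
  assumes "step_mean pol q s (\<lambda>_. 1) = 1"
  shows "step_var pol q s f = step_mean pol q s (\<lambda>y. (f y)\<^sup>2) - (step_mean pol q s f)\<^sup>2"
proof -
  define m where "m = step_mean pol q s f"
  have "step_var pol q s f = step_mean pol q s (\<lambda>y. (f y - m)\<^sup>2)"
    by (simp add: step_var_def step_mean_def m_def)
  also have "\<dots> = step_mean pol q s (\<lambda>y. (f y)\<^sup>2) - 2 * m * step_mean pol q s f + m\<^sup>2 * step_mean pol q s (\<lambda>_. 1)"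
    by (simp add: step_mean_def power2_diff algebra_simps sum.distrib sum_subtractf sum_distrib_left)
  finally show ?thesis
    using assms by (simp add: m_def power2_eq_square)
qed

lemma occ_Suc_right: "occ pol p (Suc h) s x = (\<Sum>y\<in>UNIV. occ pol p h s y * policy_trans pol p y x)"
  by (simp add: policy_trans_def)

declare occ.simps(2)[simp del]

lemma occ_Suc_left: "occ pol p (Suc h) s x = (\<Sum>y\<in>UNIV. policy_trans pol p s y * occ pol p h y x)"
proof (induction h arbitrary: x)
  case 0
  show ?case
    by (simp add: occ_Suc_right if_distrib if_distribR cong: if_cong)
next
  case (Suc h)
  have "occ pol p (Suc (Suc h)) s x
      = (\<Sum>y\<in>UNIV. (\<Sum>z\<in>UNIV. policy_trans pol p s z * occ pol p h z y) * policy_trans pol p y x)"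
    by (simp only: occ_Suc_right[of _ _ "Suc h"] Suc.IH)
  also have "\<dots> = (\<Sum>z\<in>UNIV. policy_trans pol p s z * (\<Sum>y\<in>UNIV. occ pol p h z y * policy_trans pol p y x))"
    unfolding sum_distrib_right sum_distrib_left mult.assoc by (rule sum.swap)
  finally show ?case
    by (simp add: occ_Suc_right)
qed

lemma expected_reward_Suc:
  "expected_reward pol p r (Suc h) s = (\<Sum>y\<in>UNIV. policy_trans pol p s y * expected_reward pol p r h y)"
  unfolding expected_reward_def occ_Suc_left sum_distrib_right sum_distrib_left mult.assoc
  by (rule sum.swap)

lemma mdp_value_eq_suminf: "mdp_value \<gamma> r pol p s = (\<Sum>h. \<gamma> ^ h * expected_reward pol p r h s)"
  by (simp add: mdp_value_def expected_reward_def policy_reward_def)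

locale stochastic_mdp =
  fixes pol :: "'s::finite \<Rightarrow> 'a::finite \<Rightarrow> real" and p :: "'s \<Rightarrow> 'a \<Rightarrow> 's \<Rightarrow> real"
  assumes policy_dist: "\<And>x. is_dist (pol x)" and trans_dist: "\<And>x a. is_dist (p x a)"
begin

lemma policy_trans_nonneg: "0 \<le> policy_trans pol p x y"
  unfolding policy_trans_def
  by (intro sum_nonneg mult_nonneg_nonneg is_dist_nonneg policy_dist trans_dist)

lemma policy_trans_sum: "(\<Sum>y\<in>UNIV. policy_trans pol p x y) = 1"
  unfolding policy_trans_def
  by (subst sum.swap) (simp add: sum_distrib_left[symmetric] is_dist_sum policy_dist trans_dist)

lemma step_mean_const_1: "step_mean pol p s (\<lambda>_. 1) = 1"
  by (simp add: step_mean_eq_policy_trans policy_trans_sum)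

lemma occ_nonneg: "0 \<le> occ pol p h s x"
  by (induction h arbitrary: x)
     (auto intro!: sum_nonneg mult_nonneg_nonneg policy_trans_nonneg simp: occ_Suc_right)

lemma occ_sum: "(\<Sum>x\<in>UNIV. occ pol p h s x) = 1"
proof (induction h)
  case 0
  then show ?case by simp
next
  case (Suc h)
  have "(\<Sum>x\<in>UNIV. occ pol p (Suc h) s x)
      = (\<Sum>y\<in>UNIV. occ pol p h s y * (\<Sum>x\<in>UNIV. policy_trans pol p y x))"
    unfolding occ_Suc_right sum_distrib_left by (rule sum.swap)
  then show ?case
    by (simp add: policy_trans_sum Suc)
qed

lemma occ_le_1: "occ pol p h s x \<le> 1"
  by (rule is_dist_le_1) (simp add: is_dist_def occ_nonneg occ_sum)

lemma abs_expected_reward_le: "\<bar>expected_reward pol p r h s\<bar> \<le> (\<Sum>x\<in>UNIV. \<bar>policy_reward pol r x\<bar>)"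
proof -
  have "\<bar>expected_reward pol p r h s\<bar> \<le> (\<Sum>x\<in>UNIV. \<bar>occ pol p h s x * policy_reward pol r x\<bar>)"
    unfolding expected_reward_def by (rule sum_abs)
  also have "\<dots> \<le> (\<Sum>x\<in>UNIV. \<bar>policy_reward pol r x\<bar>)"
    by (intro sum_mono) (auto simp: abs_mult occ_nonneg occ_le_1 intro!: mult_left_le_one_le)
  finally show ?thesis .
qed

context
  fixes \<gamma> :: real
  assumes gamma: "0 \<le> \<gamma>" "\<gamma> < 1"
begin

lemma summable_geometric_reward_bound: "summable (\<lambda>h. \<gamma> ^ h * (\<Sum>x\<in>UNIV. \<bar>policy_reward pol r x\<bar>))"
  using gamma by (intro summable_mult2 summable_geometric) auto

lemma norm_discounted_reward_le:
  "norm (\<gamma> ^ h * expected_reward pol p r h s) \<le> \<gamma> ^ h * (\<Sum>x\<in>UNIV. \<bar>policy_reward pol r x\<bar>)"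
  using gamma abs_expected_reward_le by (auto simp: abs_mult intro!: mult_left_mono)

lemma summable_discounted_reward: "summable (\<lambda>h. \<gamma> ^ h * expected_reward pol p r h s)"
  by (rule summable_comparison_test[OF _ summable_geometric_reward_bound])
     (use norm_discounted_reward_le in blast)

lemma abs_mdp_value_le: "\<bar>mdp_value \<gamma> r pol p s\<bar> \<le> (\<Sum>x\<in>UNIV. \<bar>policy_reward pol r x\<bar>) / (1 - \<gamma>)"
proof -
  have "norm (\<Sum>h. \<gamma> ^ h * expected_reward pol p r h s) \<le> (\<Sum>h. \<gamma> ^ h * (\<Sum>x\<in>UNIV. \<bar>policy_reward pol r x\<bar>))"
    by (intro norm_suminf_le summable_geometric_reward_bound norm_discounted_reward_le)
  then have "\<bar>mdp_value \<gamma> r pol p s\<bar> \<le> (\<Sum>h. \<gamma> ^ h * (\<Sum>x\<in>UNIV. \<bar>policy_reward pol r x\<bar>))"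
    by (simp add: mdp_value_eq_suminf)
  also have "\<dots> = (\<Sum>x\<in>UNIV. \<bar>policy_reward pol r x\<bar>) / (1 - \<gamma>)"
    using gamma by (simp add: suminf_mult2[symmetric] suminf_geometric divide_simps)
  finally show ?thesis .
qed

lemma mdp_value_bellman:
  "mdp_value \<gamma> r pol p s = policy_reward pol r s + \<gamma> * step_mean pol p s (mdp_value \<gamma> r pol p)"
proof -
  let ?f = "\<lambda>h y. \<gamma> ^ h * expected_reward pol p r h y"
  have "(\<Sum>h. ?f (Suc h) s) = (\<Sum>h. \<Sum>y\<in>UNIV. \<gamma> * policy_trans pol p s y * ?f h y)"
    by (simp add: expected_reward_Suc sum_distrib_left mult_ac)
  also have "\<dots> = (\<Sum>y\<in>UNIV. \<Sum>h. \<gamma> * policy_trans pol p s y * ?f h y)"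
    by (intro suminf_sum summable_mult summable_discounted_reward)
  also have "\<dots> = (\<Sum>y\<in>UNIV. \<gamma> * policy_trans pol p s y * mdp_value \<gamma> r pol p y)"
    by (simp only: suminf_mult[OF summable_discounted_reward] mdp_value_eq_suminf)
  also have "\<dots> = \<gamma> * step_mean pol p s (mdp_value \<gamma> r pol p)"
    by (simp add: step_mean_eq_policy_trans sum_distrib_left mult_ac)
  finally have "(\<Sum>h. ?f (Suc h) s) = \<gamma> * step_mean pol p s (mdp_value \<gamma> r pol p)" .
  moreover have "?f 0 s = policy_reward pol r s"
    by (simp add: expected_reward_def if_distrib if_distribR cong: if_cong)
  ultimately show ?thesis
    using suminf_split_head[OF summable_discounted_reward] by (simp add: mdp_value_eq_suminf)
qed

end

end

lemma occ_cong_closed: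
  assumes closed: "\<And>x a z. x \<in> K \<Longrightarrow> p x a z \<noteq> 0 \<Longrightarrow> z \<in> K"
    and "s \<in> K" and agree: "\<And>x. x \<in> K \<Longrightarrow> p x = q x"
  shows "occ pol p h s x = occ pol q h s x \<and> (x \<notin> K \<longrightarrow> occ pol p h s x = 0)"
proof (induction h arbitrary: x)
  case 0
  then show ?case using \<open>s \<in> K\<close> by auto
next
  case (Suc h)
  have agree_step: "occ pol p h s y * policy_trans pol p y x = occ pol q h s y * policy_trans pol q y x" for y
    using Suc[of y] agree[of y] by (cases "y \<in> K") (auto simp: policy_trans_def)
  have vanish_step: "occ pol p h s y * policy_trans pol p y x = 0" if "x \<notin> K" for y
  proof (cases "y \<in> K")
    case True
    then have "p y a x = 0" for a
      using closed[of y a x] \<open>x \<notin> K\<close> by auto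
    then show ?thesis by (simp add: policy_trans_def)
  next
    case False
    then show ?thesis using Suc[of y] by auto
  qed
  have "occ pol p (Suc h) s x = occ pol q (Suc h) s x"
    unfolding occ_Suc_right using agree_step by simp
  moreover have "occ pol p (Suc h) s x = 0" if "x \<notin> K"
    unfolding occ_Suc_right using vanish_step[OF that] by (intro sum.neutral) blast
  ultimately show ?case
    by blast
qed

lemma mdp_value_cong_closed:
  assumes "\<And>x a z. x \<in> K \<Longrightarrow> p x a z \<noteq> 0 \<Longrightarrow> z \<in> K"
    and "s \<in> K" and "\<And>x. x \<in> K \<Longrightarrow> p x = q x"
  shows "mdp_value \<gamma> r pol p s = mdp_value \<gamma> r pol q s"
  using occ_cong_closed[OF assms] by (simp add: mdp_value_def)

lemma measurable_occ:
  assumes "\<And>x a z. (\<lambda>\<omega>. p \<omega> x a z) \<in> borel_measurable N"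
  shows "(\<lambda>\<omega>. occ pol (p \<omega>) h s x) \<in> borel_measurable N"
proof (induction h arbitrary: x)
  case 0
  then show ?case by simp
next
  case (Suc h)
  show ?case
    unfolding occ_Suc_right policy_trans_def using Suc assms by measurable
qed

lemma measurable_mdp_value:
  assumes "\<And>x a z. (\<lambda>\<omega>. p \<omega> x a z) \<in> borel_measurable N"
  shows "(\<lambda>\<omega>. mdp_value \<gamma> r pol (p \<omega>) s) \<in> borel_measurable N"
  unfolding mdp_value_def using measurable_occ[OF assms] by measurable

lemma measurable_PiM_component_component:
  "x \<in> K \<Longrightarrow> (\<lambda>\<rho>. \<rho> x (a, z) :: real) \<in> borel_measurable (PiM K (\<lambda>_. PiM UNIV (\<lambda>_. borel)))"
  using measurable_compose[OF measurable_component_singleton[of x K]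
      measurable_component_singleton[of "(a, z)" UNIV]]
  by simp

lemma (in prob_space) indep_var_trans_value:
  fixes P :: "'a \<Rightarrow> 's::finite \<Rightarrow> 'b::finite \<Rightarrow> 's \<Rightarrow> real" and f :: "real \<Rightarrow> real"
  assumes indep: "indep_vars (\<lambda>_. PiM UNIV (\<lambda>_. borel)) (\<lambda>x \<omega>. (\<lambda>(a, y). P \<omega> x a y)) UNIV"
    and closed: "\<And>\<omega> x a z. x \<in> K \<Longrightarrow> P \<omega> x a z \<noteq> 0 \<Longrightarrow> z \<in> K"
    and "s \<notin> K" "y \<in> K" and f: "f \<in> borel_measurable borel"
  shows "indep_var borel (\<lambda>\<omega>. P \<omega> s a z) borel (\<lambda>\<omega>. f (mdp_value \<gamma> r pol (P \<omega>) y))"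
proof -
  let ?rows = "\<lambda>J \<omega>. restrict (\<lambda>x (a, y). P \<omega> x a y) J"
  let ?M = "\<lambda>_::'s. PiM UNIV (\<lambda>_::'b \<times> 's. borel :: real measure)"
  (* As K is closed, V(y) is a function of the rows in K alone: rebuild a transition function from them. *)
  let ?extend = "\<lambda>\<rho> x a z. if x \<in> K then \<rho> x (a, z) else (0::real)"
  have "indep_var (PiM {s} ?M) (?rows {s}) (PiM K ?M) (?rows K)"
    using indep_var_restrict[OF indep] \<open>s \<notin> K\<close> by auto
  moreover have "(\<lambda>\<rho>. \<rho> s (a, z)) \<in> borel_measurable (PiM {s} ?M)"
    by (rule measurable_PiM_component_component) simp
  moreover have "(\<lambda>\<rho>. ?extend \<rho> x b z') \<in> borel_measurable (PiM K ?M)" for x b z'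
    by (cases "x \<in> K") (simp_all add: measurable_PiM_component_component)
  then have "(\<lambda>\<rho>. f (mdp_value \<gamma> r pol (?extend \<rho>) y)) \<in> borel_measurable (PiM K ?M)"
    by (intro measurable_compose[OF measurable_mdp_value f])
  ultimately have "indep_var borel (\<lambda>\<omega>. ?rows {s} \<omega> s (a, z))
      borel (\<lambda>\<omega>. f (mdp_value \<gamma> r pol (?extend (?rows K \<omega>)) y))"
    by (rule indep_var_compose[unfolded comp_def])
  moreover have "mdp_value \<gamma> r pol (?extend (?rows K \<omega>)) y = mdp_value \<gamma> r pol (P \<omega>) y" for \<omega>
    by (rule mdp_value_cong_closed[where K=K, symmetric]) (auto simp: closed \<open>y \<in> K\<close> fun_eq_iff)
  ultimately show ?thesis
    by simp
qed

lemma bounded_mult_comp: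
  fixes f g :: "'a \<Rightarrow> real"
  assumes "bounded (f ` S)" "bounded (g ` S)"
  shows "bounded ((\<lambda>x. f x * g x) ` S)"
proof -
  obtain B C where "\<And>x. x \<in> S \<Longrightarrow> \<bar>f x\<bar> \<le> B" "\<And>x. x \<in> S \<Longrightarrow> \<bar>g x\<bar> \<le> C"
    using assms by (auto simp: bounded_iff)
  then have "\<bar>f x * g x\<bar> \<le> B * C" if "x \<in> S" for x
    using that by (auto simp: abs_mult intro!: mult_mono' order_trans[OF abs_ge_zero])
  then show ?thesis
    by (auto simp: bounded_iff)
qed

lemma bounded_power_comp:
  fixes f :: "'a \<Rightarrow> real"
  shows "bounded (f ` S) \<Longrightarrow> bounded ((\<lambda>x. f x ^ n) ` S)"
  by (induction n) (auto simp: image_constant_conv intro: bounded_mult_comp)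

lemma bounded_sum_comp:
  fixes f :: "'i \<Rightarrow> 'a \<Rightarrow> 'b::real_normed_vector"
  shows "(\<And>i. i \<in> I \<Longrightarrow> bounded (f i ` S)) \<Longrightarrow> bounded ((\<lambda>x. \<Sum>i\<in>I. f i x) ` S)"
  by (induction I rule: infinite_finite_induct) (auto simp: image_constant_conv intro: bounded_plus_comp)

lemma (in finite_measure) integrable_bounded_range:
  fixes f :: "'a \<Rightarrow> real"
  assumes "f \<in> borel_measurable M" "bounded (range f)"
  shows "integrable M f"
proof -
  obtain B where "\<And>x. \<bar>f x\<bar> \<le> B"
    using assms(2) by (auto simp: bounded_iff)
  then show ?thesis
    using assms(1) by (intro integrable_const_bound[where B=B]) auto
qed

locale posterior_mdp = prob_space M
  for M :: "'w measure" +
  fixes P :: "'w \<Rightarrow> 's::finite \<Rightarrow> 'a::finite \<Rightarrow> 's \<Rightarrow> real"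
    and pol :: "'s \<Rightarrow> 'a \<Rightarrow> real" and r :: "'s \<Rightarrow> 'a \<Rightarrow> real" and \<gamma> :: real
  assumes measurable_trans[measurable]: "\<And>x a y. (\<lambda>\<omega>. P \<omega> x a y) \<in> borel_measurable M"
    and trans_dist: "\<And>\<omega> x a. is_dist (P \<omega> x a)"
    and policy_dist: "\<And>x. is_dist (pol x)"
    and gamma: "0 \<le> \<gamma>" "\<gamma> < 1"
    and indep_rows: "indep_vars (\<lambda>_. PiM UNIV (\<lambda>_. borel)) (\<lambda>x \<omega>. (\<lambda>(a, y). P \<omega> x a y)) UNIV"
    and acyclic: "\<exists>rank :: 's \<Rightarrow> nat. \<forall>\<omega> x a y. P \<omega> x a y \<noteq> 0 \<longrightarrow>
               rank y < rank x \<or> (y = x \<and> (\<forall>\<omega>' a'. P \<omega>' x a' x = 1))"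
begin

abbreviation V :: "'w \<Rightarrow> 's \<Rightarrow> real"
  where "V \<omega> \<equiv> mdp_value \<gamma> r pol (P \<omega>)"

lemma stochastic_mdp_trans: "stochastic_mdp pol (P \<omega>)"
  by (intro stochastic_mdp.intro policy_dist trans_dist)

lemma bounded_trans: "bounded (range (\<lambda>\<omega>. P \<omega> x a y))"
  unfolding bounded_iff
  using is_dist_nonneg[OF trans_dist] is_dist_le_1[OF trans_dist] by (intro exI[of _ 1]) auto

lemma measurable_value[measurable]: "(\<lambda>\<omega>. V \<omega> x) \<in> borel_measurable M"
  by (rule measurable_mdp_value) (rule measurable_trans)

lemma bounded_value: "bounded (range (\<lambda>\<omega>. V \<omega> x))"
  unfolding bounded_iff
  using stochastic_mdp.abs_mdp_value_le[OF stochastic_mdp_trans gamma] by auto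

lemma trans_const_or_indep_value:
  assumes f: "f \<in> borel_measurable borel"
  shows "(\<exists>c. \<forall>\<omega>. P \<omega> s a y = c) \<or> indep_var borel (\<lambda>\<omega>. P \<omega> s a y) borel (\<lambda>\<omega>. f (V \<omega> y))"
proof -
  obtain rank :: "'s \<Rightarrow> nat" where rank: "\<And>\<omega> x a y. P \<omega> x a y \<noteq> 0 \<Longrightarrow>
      rank y < rank x \<or> (y = x \<and> (\<forall>\<omega>' a'. P \<omega>' x a' x = 1))"
    using acyclic by blast
  consider (absorbing) "\<And>\<omega> a. P \<omega> s a s = 1" | (descending) "\<And>\<omega> a z. P \<omega> s a z \<noteq> 0 \<Longrightarrow> rank z < rank s"
    using rank by blast
  then show ?thesis
  proof cases
    case absorbing
    then have "P \<omega> s a y = (if y = s then 1 else 0)" for \<omega>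
      using is_dist_eq_0_if_eq_1[OF trans_dist absorbing] by auto
    then show ?thesis by blast
  next
    case descending
    show ?thesis
    proof (cases "rank y < rank s")
      case True
      have "indep_var borel (\<lambda>\<omega>. P \<omega> s a y) borel (\<lambda>\<omega>. f (V \<omega> y))"
        by (rule indep_var_trans_value[OF indep_rows _ _ _ f, where K="{x. rank x < rank s}"])
           (use rank True in force)+
      then show ?thesis ..
    next
      case False
      then have "P \<omega> s a y = 0" for \<omega>
        using descending by force
      then show ?thesis by blast
    qed
  qed
qed

lemma expectation_trans_mult_value:
  assumes f: "f \<in> borel_measurable borel" and bounded: "bounded (range (\<lambda>\<omega>. f (V \<omega> y)))"
  shows "expectation (\<lambda>\<omega>. P \<omega> s a y * f (V \<omega> y)) = mean_trans M P s a y * expectation (\<lambda>\<omega>. f (V \<omega> y))"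
  using trans_const_or_indep_value[OF f, of s a y]
proof (elim disjE exE)
  fix c
  assume "\<forall>\<omega>. P \<omega> s a y = c"
  then show ?thesis
    by (simp add: mean_trans_def prob_space)
next
  assume "indep_var borel (\<lambda>\<omega>. P \<omega> s a y) borel (\<lambda>\<omega>. f (V \<omega> y))"
  then show ?thesis
    unfolding mean_trans_def
    by (rule indep_var_lebesgue_integral)
       (use f in \<open>auto intro!: integrable_bounded_range bounded_trans bounded\<close>)
qed

lemma measurable_step_mean:
  assumes "\<And>y. (\<lambda>\<omega>. g \<omega> y) \<in> borel_measurable M"
  shows "(\<lambda>\<omega>. step_mean pol (P \<omega>) s (g \<omega>)) \<in> borel_measurable M"
  unfolding step_mean_def using assms by measurable

lemma bounded_step_mean:
  assumes "\<And>y. bounded (range (\<lambda>\<omega>. g \<omega> y))"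
  shows "bounded (range (\<lambda>\<omega>. step_mean pol (P \<omega>) s (g \<omega>)))"
  unfolding step_mean_def
  by (intro bounded_sum_comp bounded_mult_comp bounded_trans assms) (simp add: image_constant_conv)

lemma expectation_step_mean_value:
  assumes f: "f \<in> borel_measurable borel" and bounded: "\<And>y. bounded (range (\<lambda>\<omega>. f (V \<omega> y)))"
  shows "expectation (\<lambda>\<omega>. step_mean pol (P \<omega>) s (\<lambda>y. f (V \<omega> y)))
    = step_mean pol (mean_trans M P) s (\<lambda>y. expectation (\<lambda>\<omega>. f (V \<omega> y)))"
proof -
  have "integrable M (\<lambda>\<omega>. P \<omega> s a y * f (V \<omega> y))" for a y
    using f by (intro integrable_bounded_range bounded_mult_comp bounded_trans bounded) auto
  then have "expectation (\<lambda>\<omega>. step_mean pol (P \<omega>) s (\<lambda>y. f (V \<omega> y)))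
      = (\<Sum>a\<in>UNIV. \<Sum>y\<in>UNIV. pol s a * expectation (\<lambda>\<omega>. P \<omega> s a y * f (V \<omega> y)))"
    by (simp add: step_mean_def mult.assoc)
  then show ?thesis
    by (simp add: expectation_trans_mult_value[OF f bounded] step_mean_def mult.assoc)
qed

lemma step_mean_mean_trans_const_1: "step_mean pol (mean_trans M P) s (\<lambda>_. 1) = 1"
  using expectation_step_mean_value[of "\<lambda>_. 1"]
  by (simp add: stochastic_mdp.step_mean_const_1[OF stochastic_mdp_trans] prob_space image_constant_conv)

lemma expectation_step_mean_eq_mean_value:
  "expectation (\<lambda>\<omega>. step_mean pol (P \<omega>) s (V \<omega>)) = step_mean pol (mean_trans M P) s (mean_value M P \<gamma> r pol)"
  using expectation_step_mean_value[of "\<lambda>x. x"] bounded_value by (simp add: mean_value_def[abs_def])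

lemma post_var_eq_variance_step_mean:
  "post_var M P \<gamma> r pol s = \<gamma>\<^sup>2 * variance (\<lambda>\<omega>. step_mean pol (P \<omega>) s (V \<omega>))"
proof -
  let ?X = "\<lambda>\<omega>. step_mean pol (P \<omega>) s (V \<omega>)"
  have bellman: "V \<omega> s = policy_reward pol r s + \<gamma> * ?X \<omega>" for \<omega>
    by (rule stochastic_mdp.mdp_value_bellman[OF stochastic_mdp_trans gamma])
  have "integrable M ?X"
    by (intro integrable_bounded_range measurable_step_mean bounded_step_mean bounded_value measurable_value)
  then have "expectation (\<lambda>\<omega>. V \<omega> s) = policy_reward pol r s + \<gamma> * expectation ?X"
    by (simp add: bellman prob_space)
  then have "(V \<omega> s - expectation (\<lambda>\<omega>. V \<omega> s))\<^sup>2 = \<gamma>\<^sup>2 * (?X \<omega> - expectation ?X)\<^sup>2" for \<omega>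
    by (simp add: bellman power_mult_distrib[symmetric] algebra_simps)
  then show ?thesis
    by (simp add: post_var_def)
qed

lemma expectation_square_value:
  "expectation (\<lambda>\<omega>. (V \<omega> y)\<^sup>2) = post_var M P \<gamma> r pol y + (mean_value M P \<gamma> r pol y)\<^sup>2"
  using variance_eq[of "\<lambda>\<omega>. V \<omega> y"]
  by (simp add: post_var_def mean_value_def integrable_bounded_range bounded_value bounded_power_comp)

lemma expectation_square_step_mean:
  "expectation (\<lambda>\<omega>. (step_mean pol (P \<omega>) s (V \<omega>))\<^sup>2)
    = step_mean pol (mean_trans M P) s (\<lambda>y. expectation (\<lambda>\<omega>. (V \<omega> y)\<^sup>2))
      - expectation (\<lambda>\<omega>. step_var pol (P \<omega>) s (V \<omega>))"
proof -
  let ?X = "\<lambda>\<omega>. step_mean pol (P \<omega>) s (V \<omega>)"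
  let ?Y = "\<lambda>\<omega>. step_mean pol (P \<omega>) s (\<lambda>y. (V \<omega> y)\<^sup>2)"
  have square_eq: "(?X \<omega>)\<^sup>2 = ?Y \<omega> - step_var pol (P \<omega>) s (V \<omega>)" for \<omega>
    using step_var_eq[OF stochastic_mdp.step_mean_const_1[OF stochastic_mdp_trans]] by simp
  have bounded_X: "bounded (range ?X)" and bounded_Y: "bounded (range ?Y)"
    by (intro bounded_step_mean bounded_value bounded_power_comp)+
  have "integrable M ?Y"
    using bounded_Y by (intro integrable_bounded_range measurable_step_mean) auto
  moreover have "integrable M (\<lambda>\<omega>. step_var pol (P \<omega>) s (V \<omega>))"
  proof (rule integrable_bounded_range)
    show "(\<lambda>\<omega>. step_var pol (P \<omega>) s (V \<omega>)) \<in> borel_measurable M"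
      unfolding step_var_def Let_def by measurable
    have "bounded (range (\<lambda>\<omega>. ?Y \<omega> - (?X \<omega>)\<^sup>2))"
      by (intro bounded_minus_comp bounded_Y bounded_power_comp bounded_X)
    then show "bounded (range (\<lambda>\<omega>. step_var pol (P \<omega>) s (V \<omega>)))"
      by (simp add: square_eq)
  qed
  ultimately have "expectation (\<lambda>\<omega>. (?X \<omega>)\<^sup>2) = expectation ?Y - expectation (\<lambda>\<omega>. step_var pol (P \<omega>) s (V \<omega>))"
    by (simp add: square_eq)
  also have "expectation ?Y = step_mean pol (mean_trans M P) s (\<lambda>y. expectation (\<lambda>\<omega>. (V \<omega> y)\<^sup>2))"
    by (rule expectation_step_mean_value) (auto intro: bounded_power_comp bounded_value)
  finally show ?thesis .
qed

end

theorem theorem1: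
  fixes M :: "'w measure"
    and P :: "'w \<Rightarrow> 's::finite \<Rightarrow> 'a::finite \<Rightarrow> 's \<Rightarrow> real"
    and pol :: "'s \<Rightarrow> 'a \<Rightarrow> real"
    and r :: "'s \<Rightarrow> 'a \<Rightarrow> real"
    and \<gamma> :: real
    and s :: 's
  assumes prob: "prob_space M"
    and meas: "\<And>x a y. (\<lambda>\<omega>. P \<omega> x a y) \<in> borel_measurable M"
    and trans: "\<And>\<omega> x a. is_dist (P \<omega> x a)"
    and policy: "\<And>x. is_dist (pol x)"
    and gamma: "0 \<le> \<gamma>" "\<gamma> < 1"
    and A1: "prob_space.indep_vars M (\<lambda>_. PiM UNIV (\<lambda>_. borel))
               (\<lambda>x \<omega>. (\<lambda>(a, y). P \<omega> x a y)) UNIV"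
    and A2: "\<exists>rank :: 's \<Rightarrow> nat. \<forall>\<omega> x a y. P \<omega> x a y \<noteq> 0 \<longrightarrow>
               rank y < rank x \<or> (y = x \<and> (\<forall>\<omega>' a'. P \<omega>' x a' x = 1))"
  shows "post_var M P \<gamma> r pol s =
           \<gamma>\<^sup>2 * local_unc M P \<gamma> r pol s
           + \<gamma>\<^sup>2 * (\<Sum>a\<in>UNIV. \<Sum>s'\<in>UNIV. pol s a * mean_trans M P s a s' * post_var M P \<gamma> r pol s')"
proof -
  interpret posterior_mdp M P pol r \<gamma>
    using assms by (simp add: posterior_mdp_def posterior_mdp_axioms_def)
  let ?X = "\<lambda>\<omega>. step_mean pol (P \<omega>) s (V \<omega>)"
  let ?pbar = "mean_trans M P" and ?Vbar = "mean_value M P \<gamma> r pol" and ?U = "post_var M P \<gamma> r pol"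
  have "integrable M ?X" "integrable M (\<lambda>\<omega>. (?X \<omega>)\<^sup>2)"
    by (intro integrable_bounded_range measurable_step_mean bounded_step_mean bounded_value
        bounded_power_comp measurable_value borel_measurable_power)+
  then have "variance ?X = expectation (\<lambda>\<omega>. (?X \<omega>)\<^sup>2) - (expectation ?X)\<^sup>2"
    by (rule variance_eq)
  also have "\<dots> = step_mean pol ?pbar s (\<lambda>y. ?U y + (?Vbar y)\<^sup>2)
      - expectation (\<lambda>\<omega>. step_var pol (P \<omega>) s (V \<omega>)) - (step_mean pol ?pbar s ?Vbar)\<^sup>2"
    by (simp add: expectation_square_step_mean expectation_square_value expectation_step_mean_eq_mean_value)
  also have "\<dots> = local_unc M P \<gamma> r pol s + step_mean pol ?pbar s ?U"
    by (simp add: local_unc_def step_mean_add step_var_eq[OF step_mean_mean_trans_const_1])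
  finally show ?thesis
    by (simp add: post_var_eq_variance_step_mean step_mean_def distrib_left)
qed

end
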